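(* Suppose $z^\star=(v^\star,\lambda^\star,\mu^\star)$ is a fixed point of the SQP-type iteration $z_{k+1}=\pi(z_k)$ and that the second-order sufficient conditions (SOSC), the linear independence constraint qualification (LICQ) and strict complementarity hold at $z^\star$ with respect to the QP subproblem (defined below) with $z_k=z^\star$. Then, in a neighborhood of $z^\star$, the iteration map $z_{k+1}=\pi(z_k)$ is given by the solution to the parametric root-finding problem $R(z;z_k)=0$ with the residual \[ R(z;\bar z)=\begin{bmatrix} W(\bar z)(v-\bar v)+q(\bar z)+\tilde G(\bar v)\tilde\lambda \\ \tilde g(\bar v)+\tilde G(\bar v)^{\top}(v-\bar v)\end{bmatrix}, \] where $\tilde g(v)=(g(v),h_{\mathcal A}(v))$ and $\tilde G(\bar v)=(G(\bar v),H_{\mathcal A}(\bar v))$ collect the equality constraints and the strictly active inequality constraints (index set $\mathcal A$), with associated multipliers $\tilde\lambda=(\lambda,\mu_{\mathcal A})$. Furthermore, the map $\pi$ is differentiable in a neighborhood of $z^\star$.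
   Context: Consider the NLP $\min_{v\in\mathbb R^{n_v}} f(v)$ s.t. $g(v)=0$, $h(v)\le 0$, with $f,g,h$ twice continuously differentiable, and Lagrangian $\mathcal L(v,\lambda,\mu)=f(v)+\lambda^\top g(v)+\mu^\top h(v)$. For a primal-dual iterate $z_k=(v_k,\lambda_k,\mu_k)$, the QP subproblem is $\min_v \tfrac12 (v-v_k)^\top W(z_k)(v-v_k)+q(z_k)^\top(v-v_k)$ s.t. $g(v_k)+G(v_k)^\top(v-v_k)=0$, $h(v_k)+H(v_k)^\top(v-v_k)\le 0$, where $W(z)\succeq 0$ approximates $\nabla_v^2\mathcal L$, and $q(z)\approx\nabla f(v)$ (possibly depending on the dual iterates), $G(v)\approx\nabla g(v)$, $H(v)\approx\nabla h(v)$ are possibly inexact first-order derivatives. The SQP-type iteration is $z_{k+1}=\pi(z_k)$, where $\pi(z_k)$ is the primal-dual solution of this QP, i.e. $z_{k+1}$ satisfies its KKT conditions. *)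

theory Defs
  imports "HOL-Analysis.Analysis"
begin

text \<open>Primal-dual iterates z = (v, lambda, mu) :: real^'n * real^'m * real^'p.
  G v is the n_v x n_g matrix approximating the gradient of g (columns = constraint
  gradients), H v the n_v x n_h matrix approximating the gradient of h.\<close>

type_synonym ('n,'m,'p) pd = "(real^'n) \<times> (real^'m) \<times> (real^'p)"

definition pv :: "('n::finite,'m::finite,'p::finite) pd \<Rightarrow> real^'n" where
  "pv z = fst z"
definition plam :: "('n::finite,'m::finite,'p::finite) pd \<Rightarrow> real^'m" where
  "plam z = fst (snd z)"
definition pmu :: "('n::finite,'m::finite,'p::finite) pd \<Rightarrow> real^'p" where
  "pmu z = snd (snd z)"

definition C1_map :: "('a::real_normed_vector \<Rightarrow> 'b::real_normed_vector) \<Rightarrow> bool" where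
  "C1_map f \<longleftrightarrow> (\<exists>f'. (\<forall>x. (f has_derivative blinfun_apply (f' x)) (at x)) \<and> continuous_on UNIV f')"

definition C2_map :: "('a::real_normed_vector \<Rightarrow> 'b::real_normed_vector) \<Rightarrow> bool" where
  "C2_map f \<longleftrightarrow> (\<exists>f'. (\<forall>x. (f has_derivative blinfun_apply (f' x)) (at x)) \<and> C1_map f')"

definition qp_kkt ::
  "(('n::finite,'m::finite,'p::finite) pd \<Rightarrow> real^'n^'n) \<Rightarrow> (('n,'m,'p) pd \<Rightarrow> real^'n)
   \<Rightarrow> (real^'n \<Rightarrow> real^'m) \<Rightarrow> (real^'n \<Rightarrow> real^'p)
   \<Rightarrow> (real^'n \<Rightarrow> real^'m^'n) \<Rightarrow> (real^'n \<Rightarrow> real^'p^'n)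
   \<Rightarrow> ('n,'m,'p) pd \<Rightarrow> ('n,'m,'p) pd \<Rightarrow> bool" where
  "qp_kkt W q g h G H zb z \<longleftrightarrow>
     (let vb = pv zb; d = pv z - vb; hl = h vb + transpose (H vb) *v d in
       W zb *v d + q zb + G vb *v plam z + H vb *v pmu z = 0
     \<and> g vb + transpose (G vb) *v d = 0
     \<and> (\<forall>i. hl $ i \<le> 0)
     \<and> (\<forall>i. pmu z $ i \<ge> 0)
     \<and> (\<forall>i. pmu z $ i * hl $ i = 0))"

definition residual_zero ::
  "'p set \<Rightarrow> (('n::finite,'m::finite,'p::finite) pd \<Rightarrow> real^'n^'n) \<Rightarrow> (('n,'m,'p) pd \<Rightarrow> real^'n)
   \<Rightarrow> (real^'n \<Rightarrow> real^'m) \<Rightarrow> (real^'n \<Rightarrow> real^'p)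
   \<Rightarrow> (real^'n \<Rightarrow> real^'m^'n) \<Rightarrow> (real^'n \<Rightarrow> real^'p^'n)
   \<Rightarrow> ('n,'m,'p) pd \<Rightarrow> ('n,'m,'p) pd \<Rightarrow> bool" where
  "residual_zero A W q g h G H zb z \<longleftrightarrow>
     (let vb = pv zb; d = pv z - vb in
       W zb *v d + q zb + G vb *v plam z + (\<Sum>i\<in>A. pmu z $ i *\<^sub>R column i (H vb)) = 0
     \<and> g vb + transpose (G vb) *v d = 0
     \<and> (\<forall>i\<in>A. (h vb + transpose (H vb) *v d) $ i = 0))"

end

theory Submission
  imports Defs
begin

(* Near z*, strict complementarity freezes the active set of the QP: the multipliers of the
   active constraints stay positive and the inactive linearised constraints stay strictly
   negative, so the KKT conditions of the QP at zb are equivalent to the square linear system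
   L(zb) y = b(zb) behind R(z; zb) = 0, with the inactive multipliers set to zero.  L depends
   differentiably on zb and is nonsingular at z* by SOSC and LICQ, hence nonsingular near z*;
   the solution y(zb) is then differentiable by the inverse function theorem applied to
   (zb, y) |-> (zb, L(zb) y). *)

lemma linear_euclidean_expansion:
  fixes f :: "'a::euclidean_space \<Rightarrow> 'b::real_vector"
  assumes "linear f"
  shows "f y = (\<Sum>k\<in>Basis. (y \<bullet> k) *\<^sub>R f k)"
proof -
  have "f y = f (\<Sum>k\<in>Basis. (y \<bullet> k) *\<^sub>R k)"
    by (simp add: euclidean_representation)
  also have "\<dots> = (\<Sum>k\<in>Basis. (y \<bullet> k) *\<^sub>R f k)"
    by (simp add: linear_sum[OF assms] linear_scale[OF assms] o_def)
  finally show ?thesis .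
qed

lemma differentiable_at_imp_continuous_on:
  "(\<And>x. x \<in> S \<Longrightarrow> f differentiable (at x)) \<Longrightarrow> continuous_on S f"
  by (intro continuous_at_imp_continuous_on ballI differentiable_imp_continuous_within)

lemma linear_family_inj_nhd:
  fixes L :: "'a::t2_space \<Rightarrow> 'b::euclidean_space \<Rightarrow> 'c::euclidean_space"
  assumes lin: "\<And>x. linear (L x)"
    and cont: "\<And>k. k \<in> Basis \<Longrightarrow> continuous_on UNIV (\<lambda>x. L x k)"
    and inj: "inj (L x0)"
  obtains S where "open S" "x0 \<in> S" "\<And>x. x \<in> S \<Longrightarrow> inj (L x)"
proof -
  define Lb where "Lb x = Blinfun (L x)" for x
  have Lb_apply: "blinfun_apply (Lb x) = L x" for x
    using lin by (simp add: Lb_def bounded_linear_Blinfun_apply linear_linear)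
  obtain li where "linear li" "li \<circ> L x0 = id"
    using linear_injective_left_inverse[OF lin inj] by blast
  then obtain B where B: "B > 0" "\<And>y. B * norm y \<le> norm (L x0 y)"
    using linear_invertible_bounded_below_pos[OF lin] by blast
  have "continuous_on UNIV Lb"
    by (rule continuous_on_blinfun_componentwise) (simp add: Lb_apply cont)
  then have "open (Lb -` ball (Lb x0) B)"
    by (intro open_vimage) auto
  moreover have "x0 \<in> Lb -` ball (Lb x0) B"
    using B(1) by simp
  moreover have "inj (L x)" if "x \<in> Lb -` ball (Lb x0) B" for x
    unfolding linear_injective_0[OF lin]
  proof (intro allI impI)
    fix y assume "L x y = 0"
    then have "B * norm y \<le> norm ((Lb x0 - Lb x) y)"
      using B(2)[of y] by (simp add: blinfun.diff_left Lb_apply)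
    also have "\<dots> \<le> dist (Lb x0) (Lb x) * norm y"
      by (simp add: dist_norm norm_blinfun)
    finally have "B * norm y \<le> dist (Lb x0) (Lb x) * norm y" .
    moreover have "dist (Lb x0) (Lb x) < B"
      using that by simp
    ultimately show "y = 0"
      using mult_strict_right_mono[of "dist (Lb x0) (Lb x)" B "norm y"] by fastforce
  qed
  ultimately show ?thesis
    using that by blast
qed

lemma has_derivative_linear_family_apply:
  fixes L :: "'a::real_normed_vector \<Rightarrow> 'b::euclidean_space \<Rightarrow> 'c::real_normed_vector"
  assumes lin: "\<And>x. linear (L x)"
    and D: "\<And>k. k \<in> Basis \<Longrightarrow> ((\<lambda>x. L x k) has_derivative D k) (at x0)"
  shows "((\<lambda>p. L (fst p) (snd p)) has_derivative
           (\<lambda>p. (\<Sum>k\<in>Basis. (y0 \<bullet> k) *\<^sub>R D k (fst p)) + L x0 (snd p))) (at (x0, y0))"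
proof -
  have "((\<lambda>p. L (fst p) k) has_derivative (\<lambda>p. D k (fst p))) (at (x0, y0))" if "k \<in> Basis" for k
    using has_derivative_compose[of fst fst "(x0, y0)" UNIV "\<lambda>x. L x k" "D k"] D[OF that]
    by (simp add: has_derivative_fst)
  then have "((\<lambda>p. \<Sum>k\<in>Basis. (snd p \<bullet> k) *\<^sub>R L (fst p) k) has_derivative
          (\<lambda>p. \<Sum>k\<in>Basis. (y0 \<bullet> k) *\<^sub>R D k (fst p) + (snd p \<bullet> k) *\<^sub>R L x0 k)) (at (x0, y0))"
    by (intro has_derivative_sum has_derivative_eq_rhs[OF has_derivative_scaleR[OF
          has_derivative_inner_left[OF has_derivative_snd[OF has_derivative_ident]]]])
       (auto simp: algebra_simps)
  then show ?thesis
    by (simp add: sum.distrib flip: linear_euclidean_expansion[OF lin])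
qed

lemma linear_system_solution_differentiable:
  fixes L :: "'a::euclidean_space \<Rightarrow> 'b::euclidean_space \<Rightarrow> 'b" and b :: "'a \<Rightarrow> 'b"
  assumes lin: "\<And>x. linear (L x)"
    and dL: "\<And>x k. k \<in> Basis \<Longrightarrow> (\<lambda>x. L x k) differentiable (at x)"
    and db: "b differentiable (at x0)"
    and S: "open S" "x0 \<in> S" and inj: "\<And>x. x \<in> S \<Longrightarrow> inj (L x)"
  shows "(\<lambda>x. inv (L x) (b x)) differentiable (at x0)"
proof -
  define D where "D x k = frechet_derivative (\<lambda>x. L x k) (at x)" for x k
  have D: "((\<lambda>x. L x k) has_derivative D x k) (at x)" if "k \<in> Basis" for x k
    using dL[OF that] by (simp add: D_def frechet_derivative_works)
  define y0 where "y0 = inv (L x0) (b x0)"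
  have Ly0: "L x0 y0 = b x0"
    using linear_injective_imp_surjective[OF lin inj[OF S(2)]]
    by (simp add: y0_def surj_f_inv_f)
  \<comment> \<open>\<open>Psi\<close> is locally inverted by \<open>(x, w) \<mapsto> (x, inv (L x) w)\<close>, whose differentiability
    comes from the inverse function theorem once \<open>Psi'\<close> is shown injective.\<close>
  define Psi where "Psi p = (fst p, L (fst p) (snd p))" for p :: "'a \<times> 'b"
  define Psi' where
    "Psi' x y p = (fst p, (\<Sum>k\<in>Basis. (y \<bullet> k) *\<^sub>R D x k (fst p)) + L x (snd p))" for x y p
  have dPsi: "(Psi has_derivative Psi' x y) (at (x, y))" for x y
    unfolding Psi_def [abs_def] Psi'_def
    by (intro has_derivative_Pair has_derivative_fst[OF has_derivative_ident]
        has_derivative_linear_family_apply lin D)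
  have cont: "continuous_on (S \<times> UNIV) Psi"
  proof (intro continuous_at_imp_continuous_on ballI)
    fix p :: "'a \<times> 'b"
    show "isCont Psi p"
      using has_derivative_continuous[OF dPsi[of "fst p" "snd p"]] by simp
  qed
  have left_inverse: "(\<lambda>p. (fst p, inv (L (fst p)) (snd p))) (Psi p) = p" if "p \<in> S \<times> UNIV" for p
    using that inj by (auto simp: Psi_def inv_f_f)
  have "linear (Psi' x0 y0)"
    using has_derivative_linear[OF dPsi] .
  moreover have "inj (Psi' x0 y0)"
  proof -
    have "(\<Sum>k\<in>Basis. (y0 \<bullet> k) *\<^sub>R D x0 k 0) = 0"
      using has_derivative_linear[OF D] by (simp add: linear_0)
    then have "Psi' x0 y0 p = 0 \<Longrightarrow> p = 0" for p
      using inj[OF S(2)] unfolding linear_injective_0[OF lin]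
      by (cases p) (auto simp: Psi'_def zero_prod_def)
    then show ?thesis
      using linear_injective_0[OF \<open>linear (Psi' x0 y0)\<close>] by blast
  qed
  ultimately obtain Psi_inv' where "Psi' x0 y0 \<circ> Psi_inv' = id"
    using linear_surjective_right_inverse linear_injective_imp_surjective by blast
  then have "((\<lambda>p. (fst p, inv (L (fst p)) (snd p))) has_derivative Psi_inv') (at (Psi (x0, y0)))"
    using S(2)
    by (intro has_derivative_inverse_strong[OF open_Times[OF S(1) open_UNIV] _ cont left_inverse dPsi])
       auto
  then have "(\<lambda>p. (fst p, inv (L (fst p)) (snd p))) differentiable (at (x0, b x0))"
    by (auto simp: differentiable_def Psi_def Ly0)
  from differentiable_compose[OF this differentiable_Pair[OF differentiable_ident db]]
  have "(\<lambda>x. (x, inv (L x) (b x))) differentiable (at x0)"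
    by simp
  then show ?thesis
    using differentiable_compose[OF bounded_linear_imp_differentiable[OF bounded_linear_snd]]
    by fastforce
qed

lemma parametric_linear_system_solution:
  fixes L :: "'a::euclidean_space \<Rightarrow> 'b::euclidean_space \<Rightarrow> 'b" and b :: "'a \<Rightarrow> 'b"
  assumes lin: "\<And>x. linear (L x)"
    and dL: "\<And>x k. k \<in> Basis \<Longrightarrow> (\<lambda>x. L x k) differentiable (at x)"
    and db: "\<And>x. b differentiable (at x)"
    and inj: "inj (L x0)"
  obtains S s where "open S" "x0 \<in> S"
    "\<And>x y. x \<in> S \<Longrightarrow> L x y = b x \<longleftrightarrow> y = s x"
    "\<And>x. x \<in> S \<Longrightarrow> s differentiable (at x)"
proof -
  have "continuous_on UNIV (\<lambda>x. L x k)" if "k \<in> Basis" for k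
    using dL[OF that] by (rule differentiable_at_imp_continuous_on)
  then obtain S where S: "open S" "x0 \<in> S" "\<And>x. x \<in> S \<Longrightarrow> inj (L x)"
    using linear_family_inj_nhd[of L, OF lin _ inj] by blast
  show ?thesis
  proof (rule that[OF S(1,2)])
    fix x y assume "x \<in> S"
    then have "bij (L x)"
      using S(3) linear_injective_imp_surjective[OF lin] by (simp add: bij_def)
    then show "L x y = b x \<longleftrightarrow> y = inv (L x) (b x)"
      by (simp add: bij_inv_eq_iff)
  next
    show "(\<lambda>x. inv (L x) (b x)) differentiable (at x)" if "x \<in> S" for x
      using linear_system_solution_differentiable[OF lin dL db S(1) that S(3)] .
  qed
qed

lemma matrix_vector_mult_eq_sum_support:
  fixes M :: "real^'p::finite^'n::finite"
  assumes "\<And>i. i \<notin> A \<Longrightarrow> x $ i = 0"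
  shows "M *v x = (\<Sum>i\<in>A. x $ i *\<^sub>R column i M)"
proof -
  have "M *v x = (\<Sum>i\<in>UNIV. x $ i *\<^sub>R column i M)"
    by (simp add: matrix_mult_sum scalar_mult_eq_scaleR)
  also have "\<dots> = (\<Sum>i\<in>A. x $ i *\<^sub>R column i M)"
    by (rule sum.mono_neutral_right) (use assms in auto)
  finally show ?thesis .
qed

lemma inner_column_eq: "(d::real^'n::finite) \<bullet> column i (M::real^'p::finite^'n) = (transpose M *v d) $ i"
  by (simp add: inner_vec_def column_def transpose_def matrix_vector_mult_def mult.commute)

lemma differentiable_linear_compose:
  "linear T \<Longrightarrow> F differentiable (at x) \<Longrightarrow> (\<lambda>x. T (F x)) differentiable (at x)"
  for T :: "'a::euclidean_space \<Rightarrow> 'b::real_normed_vector"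
  by (rule differentiable_compose[of T]) (auto intro: bounded_linear_imp_differentiable simp: linear_linear)

lemma linear_matrix_vector_mult_left: "linear (\<lambda>M::real^'n::finite^'m::finite. M *v x)"
  by (rule linearI) (simp_all add: matrix_vector_mult_add_rdistrib scaleR_matrix_vector_assoc)

lemma linear_column: "linear (column i :: real^'n::finite^'m::finite \<Rightarrow> real^'m)"
  by (rule linearI) (simp_all add: column_def vec_eq_iff)

lemma linear_transpose: "linear (transpose :: real^'n::finite^'m::finite \<Rightarrow> real^'m^'n)"
  by (rule linearI) (simp_all add: transpose_def vec_eq_iff)

lemma pv_eq_fst: "pv = fst" and pmu_eq_snd_snd: "pmu = (\<lambda>z. snd (snd z))"
  by (auto simp: pv_def pmu_def)

lemma pd_eq_iff:
  "(z::('n::finite,'m::finite,'p::finite) pd) = z' \<longleftrightarrow> pv z = pv z' \<and> plam z = plam z' \<and> pmu z = pmu z'"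
  by (cases z; cases z') (auto simp: pv_def plam_def pmu_def)

lemma pd_simps [simp]:
  "pv (a, b, c) = a" "plam (a, b, c) = b" "pmu (a, b, c) = c"
  "pv (z + z') = pv z + pv z'" "plam (z + z') = plam z + plam z'" "pmu (z + z') = pmu z + pmu z'"
  "pv (z - z') = pv z - pv z'" "plam (z - z') = plam z - plam z'" "pmu (z - z') = pmu z - pmu z'"
  "pv (r *\<^sub>R z) = r *\<^sub>R pv z" "plam (r *\<^sub>R z) = r *\<^sub>R plam z" "pmu (r *\<^sub>R z) = r *\<^sub>R pmu z"
  "pv 0 = 0" "plam 0 = 0" "pmu 0 = 0"
  by (auto simp: pv_def plam_def pmu_def)

lemma C1_map_differentiable: "C1_map f \<Longrightarrow> f differentiable (at x)"
  unfolding C1_map_def by (auto intro: differentiableI)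

lemma C2_map_differentiable: "C2_map f \<Longrightarrow> f differentiable (at x)"
  unfolding C2_map_def by (auto intro: differentiableI)

text \<open>The multipliers of the inactive constraints are kept as unknowns, subject to the trivial
  equations \<open>\<mu>\<^sub>i = 0\<close>; this makes the reduced KKT system square on the whole primal-dual space.\<close>

definition reduced_kkt_op ::
  "'p set \<Rightarrow> real^'n^'n \<Rightarrow> real^'m^'n \<Rightarrow> real^'p^'n
   \<Rightarrow> ('n::finite,'m::finite,'p::finite) pd \<Rightarrow> ('n,'m,'p) pd" where
  "reduced_kkt_op A Wm Gm Hm y =
     (Wm *v pv y + Gm *v plam y + (\<Sum>i\<in>A. pmu y $ i *\<^sub>R column i Hm),
      transpose Gm *v pv y,
      \<chi> i. if i \<in> A then (transpose Hm *v pv y) $ i else pmu y $ i)"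

definition reduced_kkt_rhs ::
  "'p set \<Rightarrow> (('n::finite,'m::finite,'p::finite) pd \<Rightarrow> real^'n)
   \<Rightarrow> (real^'n \<Rightarrow> real^'m) \<Rightarrow> (real^'n \<Rightarrow> real^'p) \<Rightarrow> ('n,'m,'p) pd \<Rightarrow> ('n,'m,'p) pd" where
  "reduced_kkt_rhs A q g h zb = (- q zb, - g (pv zb), \<chi> i. if i \<in> A then - h (pv zb) $ i else 0)"

lemma residual_zero_iff_reduced_kkt:
  "residual_zero A W q g h G H zb z \<and> (\<forall>i. i \<notin> A \<longrightarrow> pmu z $ i = 0)
    \<longleftrightarrow> reduced_kkt_op A (W zb) (G (pv zb)) (H (pv zb)) (z - (pv zb, 0, 0))
          = reduced_kkt_rhs A q g h zb"
  by (auto simp: residual_zero_def reduced_kkt_op_def reduced_kkt_rhs_def Let_def pd_eq_iff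
      vec_eq_iff algebra_simps eq_neg_iff_add_eq_0)

lemma linear_reduced_kkt_op: "linear (reduced_kkt_op A Wm Gm Hm)"
  by (rule linearI)
     (simp_all add: reduced_kkt_op_def pd_eq_iff matrix_vector_right_distrib scaleR_add_left
      scaleR_add_right sum.distrib vec_eq_iff algebra_simps matrix_vector_mult_scaleR scaleR_sum_right)

lemma reduced_kkt_op_differentiable:
  fixes Wf :: "'a::real_normed_vector \<Rightarrow> real^'n::finite^'n"
    and Gf :: "'a \<Rightarrow> real^'m::finite^'n" and Hf :: "'a \<Rightarrow> real^'p::finite^'n"
  assumes dW: "Wf differentiable (at x)" and dG: "Gf differentiable (at x)"
    and dH: "Hf differentiable (at x)"
  shows "(\<lambda>x. reduced_kkt_op A (Wf x) (Gf x) (Hf x) y) differentiable (at x)"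
proof -
  define P where "P u = (\<chi> i. if i \<in> A then u $ i else 0)" for u :: "real^'p"
  have "linear P"
    by (rule linearI) (auto simp: P_def vec_eq_iff)
  have "reduced_kkt_op A (Wf x) (Gf x) (Hf x) y =
          (Wf x *v pv y + Gf x *v plam y + (\<Sum>i\<in>A. pmu y $ i *\<^sub>R column i (Hf x)),
           transpose (Gf x) *v pv y,
           P (transpose (Hf x) *v pv y) + (\<chi> i. if i \<in> A then 0 else pmu y $ i))" for x
    unfolding reduced_kkt_op_def P_def by (simp add: vec_eq_iff)
  moreover have "(\<lambda>x. (Wf x *v pv y + Gf x *v plam y + (\<Sum>i\<in>A. pmu y $ i *\<^sub>R column i (Hf x)),
           transpose (Gf x) *v pv y,
           P (transpose (Hf x) *v pv y) + (\<chi> i. if i \<in> A then 0 else pmu y $ i))) differentiable (at x)"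
    by (intro differentiable_Pair differentiable_add differentiable_sum finite ballI differentiable_scaleR
        differentiable_const differentiable_linear_compose[OF \<open>linear P\<close>]
        differentiable_linear_compose[OF linear_matrix_vector_mult_left]
        differentiable_linear_compose[OF linear_column]
        differentiable_linear_compose[OF linear_transpose] dW dG dH)
  ultimately show ?thesis
    by simp
qed

lemma differentiable_compose_pv:
  "f differentiable (at (pv z)) \<Longrightarrow> (\<lambda>z. f (pv z)) differentiable (at z)"
  unfolding pv_eq_fst
  by (rule differentiable_compose[of f fst])
     (auto intro: bounded_linear_imp_differentiable bounded_linear_fst)

lemma reduced_kkt_rhs_differentiable:
  fixes q :: "('n::finite,'m::finite,'p::finite) pd \<Rightarrow> real^'n"
    and g :: "real^'n \<Rightarrow> real^'m" and h :: "real^'n \<Rightarrow> real^'p"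
  assumes "q differentiable (at x)" "g differentiable (at (pv x))" "h differentiable (at (pv x))"
  shows "reduced_kkt_rhs A q g h differentiable (at x)"
proof -
  define P where "P u = (\<chi> i. if i \<in> A then - u $ i else 0)" for u :: "real^'p"
  have "linear P"
    by (rule linearI) (auto simp: P_def vec_eq_iff)
  then have "(\<lambda>x. (- q x, - g (pv x), P (h (pv x)))) differentiable (at x)"
    using assms
    by (intro differentiable_Pair differentiable_minus differentiable_linear_compose[of P]
        differentiable_compose_pv)
  then show ?thesis
    by (simp add: reduced_kkt_rhs_def [abs_def] P_def)
qed

lemma inj_reduced_kkt_op:
  fixes Wm :: "real^'n::finite^'n" and Gm :: "real^'m::finite^'n" and Hm :: "real^'p::finite^'n"
  assumes LICQ: "\<And>a b. Gm *v a + (\<Sum>i\<in>A. b i *\<^sub>R column i Hm) = 0 \<Longrightarrow> a = 0 \<and> (\<forall>i\<in>A. b i = 0)"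
    and SOSC: "\<And>d. d \<noteq> 0 \<Longrightarrow> transpose Gm *v d = 0 \<Longrightarrow> (\<forall>i\<in>A. (transpose Hm *v d) $ i = 0)
                 \<Longrightarrow> 0 < d \<bullet> (Wm *v d)"
  shows "inj (reduced_kkt_op A Wm Gm Hm)"
  unfolding linear_injective_0[OF linear_reduced_kkt_op]
proof (intro allI impI)
  fix y :: "('n,'m,'p) pd"
  define d where "d = pv y"
  define multiplier_terms where "multiplier_terms = Gm *v plam y + (\<Sum>i\<in>A. pmu y $ i *\<^sub>R column i Hm)"
  assume "reduced_kkt_op A Wm Gm Hm y = 0"
  then have stationarity: "Wm *v d + multiplier_terms = 0"
    and eq_constr: "transpose Gm *v d = 0"
    and active_constr: "\<forall>i\<in>A. (transpose Hm *v d) $ i = 0"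
    and inactive_mult: "\<forall>i. i \<notin> A \<longrightarrow> pmu y $ i = 0"
    by (auto simp: reduced_kkt_op_def pd_eq_iff d_def multiplier_terms_def vec_eq_iff add.assoc
        split: if_splits)
  have "d \<bullet> multiplier_terms = 0"
    using eq_constr active_constr
    by (simp add: multiplier_terms_def inner_add_right inner_sum_right inner_column_eq
        flip: dot_lmul_matrix transpose_matrix_vector)
  with stationarity have "d \<bullet> (Wm *v d) = 0"
    by (metis add_eq_0_iff inner_minus_right neg_equal_0_iff_equal)
  then have "d = 0"
    using SOSC eq_constr active_constr by force
  then have "plam y = 0 \<and> (\<forall>i\<in>A. pmu y $ i = 0)"
    using LICQ stationarity by (simp add: multiplier_terms_def)
  with inactive_mult \<open>d = 0\<close> show "y = 0"
    by (auto simp: pd_eq_iff d_def vec_eq_iff)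
qed

definition strict_active_set ::
  "'p set \<Rightarrow> (real^'n \<Rightarrow> real^'p) \<Rightarrow> (real^'n \<Rightarrow> real^'p^'n)
   \<Rightarrow> ('n::finite,'m::finite,'p::finite) pd \<Rightarrow> ('n,'m,'p) pd \<Rightarrow> bool" where
  "strict_active_set A h H zb z \<longleftrightarrow>
     (\<forall>i\<in>A. 0 < pmu z $ i)
     \<and> (\<forall>i. i \<notin> A \<longrightarrow> (h (pv zb) + transpose (H (pv zb)) *v (pv z - pv zb)) $ i < 0)"

lemma qp_kkt_iff_residual_zero:
  assumes "strict_active_set A h H zb z"
  shows "qp_kkt W q g h G H zb z
           \<longleftrightarrow> residual_zero A W q g h G H zb z \<and> (\<forall>i. i \<notin> A \<longrightarrow> pmu z $ i = 0)"
proof -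
  define hl where "hl = h (pv zb) + transpose (H (pv zb)) *v (pv z - pv zb)"
  have pos: "\<And>i. i \<in> A \<Longrightarrow> 0 < pmu z $ i" and neg: "\<And>i. i \<notin> A \<Longrightarrow> hl $ i < 0"
    using assms by (auto simp: strict_active_set_def hl_def)
  have complementarity:
    "(\<forall>i. hl $ i \<le> 0) \<and> (\<forall>i. 0 \<le> pmu z $ i) \<and> (\<forall>i. pmu z $ i * hl $ i = 0)
       \<longleftrightarrow> (\<forall>i\<in>A. hl $ i = 0) \<and> (\<forall>i. i \<notin> A \<longrightarrow> pmu z $ i = 0)"
    using pos neg by (metis less_irrefl less_imp_le mult_eq_0_iff order_refl)
  have "H (pv zb) *v pmu z = (\<Sum>i\<in>A. pmu z $ i *\<^sub>R column i (H (pv zb)))"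
    if "\<forall>i. i \<notin> A \<longrightarrow> pmu z $ i = 0"
    using that by (intro matrix_vector_mult_eq_sum_support) auto
  with complementarity show ?thesis
    unfolding qp_kkt_def residual_zero_def Let_def hl_def [symmetric] by auto
qed

lemma open_strict_active_set:
  fixes h :: "real^'n::finite \<Rightarrow> real^'p::finite" and H :: "real^'n \<Rightarrow> real^'p^'n"
  assumes "continuous_on UNIV h" "continuous_on UNIV H"
  shows "open {p :: ('n,'m::finite,'p) pd \<times> ('n,'m,'p) pd. strict_active_set A h H (fst p) (snd p)}"
proof -
  define hl where "hl p = h (pv (fst p)) + transpose (H (pv (fst p))) *v (pv (snd p) - pv (fst p))"
    for p :: "('n,'m,'p) pd \<times> ('n,'m,'p) pd"
  have hl_cont: "continuous_on UNIV (\<lambda>p. hl p $ i)" for i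
  proof -
    have "hl p $ i = h (fst (fst p)) $ i
            + (\<Sum>j\<in>UNIV. H (fst (fst p)) $ j $ i * (fst (snd p) - fst (fst p)) $ j)" for p
      by (simp add: hl_def pv_eq_fst matrix_vector_mult_def transpose_def)
    moreover have "continuous_on UNIV (\<lambda>p::('n,'m,'p) pd \<times> ('n,'m,'p) pd. h (fst (fst p)))"
      by (rule continuous_on_compose2[OF assms(1)]) (auto intro!: continuous_on_fst continuous_on_id)
    moreover have "continuous_on UNIV (\<lambda>p::('n,'m,'p) pd \<times> ('n,'m,'p) pd. H (fst (fst p)))"
      by (rule continuous_on_compose2[OF assms(2)]) (auto intro!: continuous_on_fst continuous_on_id)
    ultimately show ?thesis
      by (simp only:) (intro continuous_intros continuous_on_component)
  qed
  have pmu_cont: "continuous_on UNIV (\<lambda>p. pmu (snd p) $ i)" for i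
    unfolding pmu_eq_snd_snd by (intro continuous_intros)
  have "open {p. if i \<in> A then 0 < pmu (snd p) $ i else hl p $ i < 0}" for i
    using open_Collect_less[OF continuous_on_const pmu_cont[of i]]
      open_Collect_less[OF hl_cont[of i] continuous_on_const]
    by (cases "i \<in> A") simp_all
  then have "open (\<Inter>i. {p. if i \<in> A then 0 < pmu (snd p) $ i else hl p $ i < 0})"
    by (intro open_INT) auto
  also have "(\<Inter>i. {p. if i \<in> A then 0 < pmu (snd p) $ i else hl p $ i < 0})
               = {p. strict_active_set A h H (fst p) (snd p)}"
    by (auto simp: strict_active_set_def hl_def split: if_splits)
  finally show ?thesis .
qed

lemma reduced_kkt_solution_map:
  fixes W :: "('n::finite,'m::finite,'p::finite) pd \<Rightarrow> real^'n^'n"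
    and q :: "('n,'m,'p) pd \<Rightarrow> real^'n"
    and g :: "real^'n \<Rightarrow> real^'m" and h :: "real^'n \<Rightarrow> real^'p"
    and G :: "real^'n \<Rightarrow> real^'m^'n" and H :: "real^'n \<Rightarrow> real^'p^'n"
  assumes dW: "\<And>z. W differentiable (at z)" and dq: "\<And>z. q differentiable (at z)"
    and dg: "\<And>v. g differentiable (at v)" and dh: "\<And>v. h differentiable (at v)"
    and dG: "\<And>v. G differentiable (at v)" and dH: "\<And>v. H differentiable (at v)"
    and inj: "inj (reduced_kkt_op A (W zs) (G (pv zs)) (H (pv zs)))"
  obtains S \<pi> where "open S" "zs \<in> S"
    "\<And>zb z. zb \<in> S \<Longrightarrow>
       residual_zero A W q g h G H zb z \<and> (\<forall>i. i \<notin> A \<longrightarrow> pmu z $ i = 0) \<longleftrightarrow> z = \<pi> zb"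
    "\<And>zb. zb \<in> S \<Longrightarrow> \<pi> differentiable (at zb)"
proof -
  obtain S s where S: "open S" "zs \<in> S"
    and sol: "\<And>zb y. zb \<in> S \<Longrightarrow>
       reduced_kkt_op A (W zb) (G (pv zb)) (H (pv zb)) y = reduced_kkt_rhs A q g h zb \<longleftrightarrow> y = s zb"
    and ds: "\<And>zb. zb \<in> S \<Longrightarrow> s differentiable (at zb)"
    by (rule parametric_linear_system_solution[OF linear_reduced_kkt_op
          reduced_kkt_op_differentiable[OF dW differentiable_compose_pv[OF dG] differentiable_compose_pv[OF dH]]
          reduced_kkt_rhs_differentiable[where A = A, OF dq dg dh] inj]) blast
  show ?thesis
  proof (rule that[OF S])
    fix zb z assume "zb \<in> S"
    then show "residual_zero A W q g h G H zb z \<and> (\<forall>i. i \<notin> A \<longrightarrow> pmu z $ i = 0)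
                 \<longleftrightarrow> z = (pv zb, 0, 0) + s zb"
      by (auto simp: residual_zero_iff_reduced_kkt sol diff_eq_eq add.commute)
  next
    fix zb assume "zb \<in> S"
    then show "(\<lambda>zb. (pv zb, 0, 0) + s zb) differentiable (at zb)"
      by (intro differentiable_add differentiable_Pair differentiable_const ds
          differentiable_compose_pv[of "\<lambda>v. v"] differentiable_ident)
  qed
qed

lemma qp_kkt_solution_map_local:
  fixes h :: "real^'n::finite \<Rightarrow> real^'p::finite" and H :: "real^'n \<Rightarrow> real^'p^'n"
    and zs :: "('n,'m::finite,'p) pd"
  assumes "continuous_on UNIV h" "continuous_on UNIV H"
    and strict: "strict_active_set A h H zs zs"
    and S: "open S" "zs \<in> S" and "continuous_on S \<pi>" and "\<pi> zs = zs"
    and \<pi>: "\<And>zb z. zb \<in> S \<Longrightarrow>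
       residual_zero A W q g h G H zb z \<and> (\<forall>i. i \<notin> A \<longrightarrow> pmu z $ i = 0) \<longleftrightarrow> z = \<pi> zb"
  obtains U V where "open U" "zs \<in> U" "open V" "zs \<in> V" "\<And>zb. zb \<in> U \<Longrightarrow> zb \<in> S \<and> \<pi> zb \<in> V"
    "\<And>zb z. zb \<in> U \<Longrightarrow> z \<in> V \<Longrightarrow> qp_kkt W q g h G H zb z \<longleftrightarrow> z = \<pi> zb"
proof -
  have "open {p. strict_active_set A h H (fst p) (snd p)}"
    using assms(1,2) by (rule open_strict_active_set)
  moreover have "(zs, zs) \<in> {p. strict_active_set A h H (fst p) (snd p)}"
    using strict by simp
  ultimately obtain U V where UV: "open U" "open V" "(zs, zs) \<in> U \<times> V"
    "U \<times> V \<subseteq> {p. strict_active_set A h H (fst p) (snd p)}"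
    by (rule open_prod_elim)
  show ?thesis
  proof (rule that[of "U \<inter> (S \<inter> \<pi> -` V)" V])
    show "open (U \<inter> (S \<inter> \<pi> -` V))"
      by (intro open_Int UV(1) continuous_open_preimage S(1) UV(2) assms(6))
    show "zs \<in> U \<inter> (S \<inter> \<pi> -` V)"
      using UV(3) S(2) \<open>\<pi> zs = zs\<close> by simp
  next
    fix zb z assume "zb \<in> U \<inter> (S \<inter> \<pi> -` V)" "z \<in> V"
    then have "zb \<in> S" and "strict_active_set A h H zb z"
      using UV(4) by (auto dest: subsetD)
    then show "qp_kkt W q g h G H zb z \<longleftrightarrow> z = \<pi> zb"
      by (simp only: qp_kkt_iff_residual_zero \<pi>)
  qed (use UV in auto)
qed

theorem lemma1:
  fixes W :: "('n::finite,'m::finite,'p::finite) pd \<Rightarrow> real^'n^'n"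
    and q :: "('n,'m,'p) pd \<Rightarrow> real^'n"
    and g :: "real^'n \<Rightarrow> real^'m" and h :: "real^'n \<Rightarrow> real^'p"
    and G :: "real^'n \<Rightarrow> real^'m^'n" and H :: "real^'n \<Rightarrow> real^'p^'n"
    and zs :: "('n,'m,'p) pd"
  assumes smooth_g: "C2_map g" and smooth_h: "C2_map h"
    and smooth_W: "C1_map W" and smooth_q: "C1_map q"
    and smooth_G: "C1_map G" and smooth_H: "C1_map H"
    and W_psd: "\<And>z d. d \<bullet> (W z *v d) \<ge> 0"
    and fixed: "qp_kkt W q g h G H zs zs"
    and LICQ: "\<And>a b. G (pv zs) *v a + (\<Sum>i\<in>{i. h (pv zs) $ i = 0}. b i *\<^sub>R column i (H (pv zs))) = 0
                 \<Longrightarrow> a = 0 \<and> (\<forall>i. h (pv zs) $ i = 0 \<longrightarrow> b i = 0)"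
    and strict_compl: "\<And>i. h (pv zs) $ i = 0 \<Longrightarrow> pmu zs $ i > 0"
    and SOSC: "\<And>d. d \<noteq> 0 \<Longrightarrow> transpose (G (pv zs)) *v d = 0
                 \<Longrightarrow> (\<forall>i. h (pv zs) $ i = 0 \<and> pmu zs $ i > 0 \<longrightarrow> (transpose (H (pv zs)) *v d) $ i = 0)
                 \<Longrightarrow> (\<forall>i. h (pv zs) $ i = 0 \<and> pmu zs $ i = 0 \<longrightarrow> (transpose (H (pv zs)) *v d) $ i \<le> 0)
                 \<Longrightarrow> d \<bullet> (W zs *v d) > 0"
  defines "A \<equiv> {i. h (pv zs) $ i = 0 \<and> pmu zs $ i > 0}"
  shows "\<exists>U V \<pi>. open U \<and> zs \<in> U \<and> open V \<and> zs \<in> V \<and> \<pi> zs = zs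
           \<and> (\<forall>zb\<in>U. \<pi> zb \<in> V)
           \<and> (\<forall>zb\<in>U. \<forall>z\<in>V. qp_kkt W q g h G H zb z \<longleftrightarrow> z = \<pi> zb)
           \<and> (\<forall>zb\<in>U. \<forall>z\<in>V. (residual_zero A W q g h G H zb z \<and> (\<forall>i. i \<notin> A \<longrightarrow> pmu z $ i = 0))
                                 \<longleftrightarrow> z = \<pi> zb)
           \<and> (\<forall>zb\<in>U. \<pi> differentiable (at zb))"
proof -
  note differentiable = C1_map_differentiable[OF smooth_W] C1_map_differentiable[OF smooth_q]
    C2_map_differentiable[OF smooth_g] C2_map_differentiable[OF smooth_h]
    C1_map_differentiable[OF smooth_G] C1_map_differentiable[OF smooth_H]
  have active: "{i. h (pv zs) $ i = 0} = A"
    using strict_compl by (auto simp: A_def)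
  have strict: "strict_active_set A h H zs zs"
    using fixed active strict_compl
    by (fastforce simp: strict_active_set_def qp_kkt_def Let_def A_def less_le)
  have "inj (reduced_kkt_op A (W zs) (G (pv zs)) (H (pv zs)))"
  proof (rule inj_reduced_kkt_op)
    show "a = 0 \<and> (\<forall>i\<in>A. b i = 0)" if "G (pv zs) *v a + (\<Sum>i\<in>A. b i *\<^sub>R column i (H (pv zs))) = 0"
      for a b
      using LICQ[of a b] that active by auto
    show "0 < d \<bullet> (W zs *v d)" if "d \<noteq> 0" "transpose (G (pv zs)) *v d = 0"
      "\<forall>i\<in>A. (transpose (H (pv zs)) *v d) $ i = 0" for d
      by (rule SOSC[OF that(1,2)]) (use that(3) in \<open>auto simp: A_def dest: strict_compl\<close>)
  qed
  then obtain S \<pi> where S: "open S" "zs \<in> S"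
    and \<pi>: "\<And>zb z. zb \<in> S \<Longrightarrow>
       residual_zero A W q g h G H zb z \<and> (\<forall>i. i \<notin> A \<longrightarrow> pmu z $ i = 0) \<longleftrightarrow> z = \<pi> zb"
    and d\<pi>: "\<And>zb. zb \<in> S \<Longrightarrow> \<pi> differentiable (at zb)"
    by (rule reduced_kkt_solution_map[OF differentiable]) blast
  have "\<pi> zs = zs"
    using \<pi>[OF S(2), of zs] fixed qp_kkt_iff_residual_zero[OF strict] by simp
  have "continuous_on UNIV h" "continuous_on UNIV H" "continuous_on S \<pi>"
    using differentiable d\<pi> by (metis differentiable_at_imp_continuous_on)+
  then obtain U V where "open U" "zs \<in> U" "open V" "zs \<in> V"
    and UV: "\<And>zb. zb \<in> U \<Longrightarrow> zb \<in> S \<and> \<pi> zb \<in> V"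
    and kkt: "\<And>zb z. zb \<in> U \<Longrightarrow> z \<in> V \<Longrightarrow> qp_kkt W q g h G H zb z \<longleftrightarrow> z = \<pi> zb"
    using qp_kkt_solution_map_local[OF _ _ strict S _ \<open>\<pi> zs = zs\<close> \<pi>] by blast
  then show ?thesis
    using \<open>\<pi> zs = zs\<close> \<pi> d\<pi>
    by - (rule exI[of _ U], rule exI[of _ V], rule exI[of _ \<pi>], simp add: UV kkt)
qed

end
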